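(* Let $d\ge 1$ and $0<\alpha\le 1/2$. There is a constant $C$ (depending only on $d$ and $\alpha$) such that for every positive integer $n$ there exists an $n$-point set $S\subset\mathbb{R}^d$ such that the origin lies at depth $\alpha n$ with respect to $S$, but the origin is contained in at most $$\bigl((d+1)\alpha^d-2d\alpha^{d+1}\bigr)\frac{n^{d+1}}{(d+1)!}+C\,n^{d}$$ of the $d$-simplices spanned by $S$.
   Context: A point $p$ lies at depth $m$ with respect to a finite set $S\subset\mathbb{R}^d$ if every closed halfspace containing $p$ contains at least $m$ points of $S$. A $d$-simplex spanned by $S$ is the convex hull of a $(d+1)$-element subset of $S$; the count is over $(d+1)$-element subsets of $S$ whose convex hull contains the origin. *)

theory Defs
  imports "HOL-Analysis.Analysis"
begin

definition closed_halfspace :: "'a::euclidean_space set \<Rightarrow> bool" where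
  "closed_halfspace H \<longleftrightarrow> (\<exists>a b. a \<noteq> 0 \<and> H = {x. inner a x \<le> b})"

definition at_depth :: "'a::euclidean_space \<Rightarrow> real \<Rightarrow> 'a set \<Rightarrow> bool" where
  "at_depth p m S \<longleftrightarrow> (\<forall>H. closed_halfspace H \<and> p \<in> H \<longrightarrow> real (card (S \<inter> H)) \<ge> m)"

definition simplicial_count :: "'a::euclidean_space \<Rightarrow> 'a set \<Rightarrow> nat" where
  "simplicial_count p S = card {T. T \<subseteq> S \<and> card T = DIM('a) + 1 \<and> p \<in> convex hull T}"

end

(*
  Take m = floor(alpha n) antipodal pairs +-q gamma(q), q = 1..m, on the moment curve
  gamma(t) = (1, t, ..., t^(d-1)), and put the remaining r = n - 2m points on the segment from
  the origin (included) towards gamma(0). A closed halfspace through the origin contains one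
  point of every pair and the origin, hence at least alpha n points.

  A simplex containing the origin either uses the origin point or an antipodal pair (there are
  O(n^d) of these), or its d+1 parameters q are distinct. Any d+1 points of the moment curve
  have, up to scaling, a unique linear dependency with all coefficients nonzero, so the signs of
  such a "good" simplex are determined by its parameter set and the sign at its smallest
  parameter. This leaves at most 2 C(m,d+1) + r C(m,d) good simplices, and the map
  x -> x^d ((d+1) n - 2 d x) is increasing on [0, n/2], so m <= alpha n gives the bound.
*)
theory Submission
  imports Defs "HOL-Computational_Algebra.Polynomial"
begin

section \<open>Linear dependencies on the moment curve\<close>

lemma vanishing_power_sums_imp_zero:
  fixes x c :: "'b \<Rightarrow> real"
  assumes fin: "finite Q" and inj: "inj_on x Q" and card: "card Q \<le> d"
    and sums: "\<And>k. k < d \<Longrightarrow> (\<Sum>q\<in>Q. c q * x q ^ k) = 0" and q0: "q0 \<in> Q"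
  shows "c q0 = 0"
proof -
  define P where "P = (\<Prod>q\<in>Q - {q0}. [:- x q, 1:])"
  have "degree P = card (Q - {q0})"
    unfolding P_def by (subst degree_prod_eq_sum_degree) auto
  with card q0 fin have deg: "degree P < d"
    by (metis card_Diff1_less order_less_le_trans)
  have "(\<Sum>q\<in>Q. c q * poly P (x q)) = (\<Sum>i\<le>degree P. coeff P i * (\<Sum>q\<in>Q. c q * x q ^ i))"
    by (simp add: poly_altdef sum_distrib_left mult_ac sum.swap[of _ Q])
  also have "\<dots> = 0"
    using sums deg by simp
  finally have "(\<Sum>q\<in>Q. c q * poly P (x q)) = 0" .
  moreover have "poly P (x q) = 0" if "q \<in> Q" "q \<noteq> q0" for q
    unfolding P_def poly_prod using that fin by (auto intro!: prod_zero)
  then have "(\<Sum>q\<in>Q. c q * poly P (x q)) = c q0 * poly P (x q0)"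
    using q0 fin by (subst sum.remove[of _ q0]) (auto intro!: sum.neutral)
  moreover have "poly P (x q0) \<noteq> 0"
    unfolding P_def poly_prod using fin inj q0 by (auto simp: inj_on_def)
  ultimately show ?thesis
    by simp
qed

locale basis_enumeration =
  fixes e :: "nat \<Rightarrow> 'a::euclidean_space"
  assumes enum: "bij_betw e {..<DIM('a)} Basis"
begin

definition moment_curve :: "real \<Rightarrow> 'a" where
  "moment_curve t = (\<Sum>i<DIM('a). t ^ i *\<^sub>R e i)"

lemma inner_moment_curve:
  assumes "k < DIM('a)"
  shows "inner (moment_curve t) (e k) = t ^ k"
proof -
  have "inner (e i) (e k) = (if i = k then 1 else 0)" if "i < DIM('a)" for i
  proof -
    have "e i \<in> Basis" "e k \<in> Basis" "e i = e k \<longleftrightarrow> i = k"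
      using enum that assms by (auto simp: bij_betw_def inj_on_def)
    then show ?thesis
      by (simp add: inner_Basis)
  qed
  then have "inner (moment_curve t) (e k) = (\<Sum>i<DIM('a). if i = k then t ^ i else 0)"
    unfolding moment_curve_def inner_sum_left by (intro sum.cong) auto
  then show ?thesis
    using assms by simp
qed

lemma moment_curve_independent:
  fixes x c :: "'b \<Rightarrow> real"
  assumes "finite Q" "inj_on x Q" "card Q \<le> DIM('a)"
    and "(\<Sum>q\<in>Q. c q *\<^sub>R moment_curve (x q)) = 0" and "q0 \<in> Q"
  shows "c q0 = 0"
proof (rule vanishing_power_sums_imp_zero[OF assms(1-3) _ assms(5)])
  fix k assume "k < DIM('a)"
  then have "(\<Sum>q\<in>Q. c q * x q ^ k) = inner (\<Sum>q\<in>Q. c q *\<^sub>R moment_curve (x q)) (e k)"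
    by (simp add: inner_sum_left inner_moment_curve)
  then show "(\<Sum>q\<in>Q. c q * x q ^ k) = 0"
    using assms(4) by simp
qed

lemma moment_curve_dependency_vanishes:
  fixes x c :: "'b \<Rightarrow> real"
  assumes fin: "finite Q" and inj: "inj_on x Q" and card: "card Q \<le> DIM('a) + 1"
    and dep: "(\<Sum>q\<in>Q. c q *\<^sub>R moment_curve (x q)) = 0" and q0: "q0 \<in> Q" "c q0 = 0"
  shows "\<forall>q\<in>Q. c q = 0"
proof -
  have "(\<Sum>q\<in>Q - {q0}. c q *\<^sub>R moment_curve (x q)) = 0"
    using dep q0 fin by (simp add: sum.remove)
  moreover have "card (Q - {q0}) \<le> DIM('a)"
    using card q0 fin by simp
  ultimately show ?thesis
    using moment_curve_independent[of "Q - {q0}" x c] fin inj q0 by (auto intro: inj_on_subset)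
qed

lemma moment_curve_dependencies_proportional:
  fixes x c c' :: "'b \<Rightarrow> real"
  assumes fin: "finite Q" and inj: "inj_on x Q" and card: "card Q \<le> DIM('a) + 1"
    and dep: "(\<Sum>q\<in>Q. c q *\<^sub>R moment_curve (x q)) = 0"
    and dep': "(\<Sum>q\<in>Q. c' q *\<^sub>R moment_curve (x q)) = 0"
    and "q0 \<in> Q" "q \<in> Q"
  shows "c' q0 * c q = c q0 * c' q"
proof -
  define d where "d q = c' q0 * c q - c q0 * c' q" for q
  have "(\<Sum>q\<in>Q. d q *\<^sub>R moment_curve (x q))
      = c' q0 *\<^sub>R (\<Sum>q\<in>Q. c q *\<^sub>R moment_curve (x q)) - c q0 *\<^sub>R (\<Sum>q\<in>Q. c' q *\<^sub>R moment_curve (x q))"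
    by (simp add: d_def scaleR_sum_right sum_subtractf algebra_simps)
  then have "(\<Sum>q\<in>Q. d q *\<^sub>R moment_curve (x q)) = 0"
    using dep dep' by simp
  moreover have "d q0 = 0"
    by (simp add: d_def)
  ultimately show ?thesis
    using moment_curve_dependency_vanishes[OF fin inj card] assms(6,7) by (force simp: d_def)
qed

end

section \<open>Counting simplices\<close>

lemma simplicial_count_image:
  fixes f :: "'b \<Rightarrow> 'a::euclidean_space"
  assumes inj: "inj_on f X"
  shows "simplicial_count p (f ` X)
    = card {J. J \<subseteq> X \<and> card J = DIM('a) + 1 \<and> p \<in> convex hull (f ` J)}"
proof -
  let ?J = "{J. J \<subseteq> X \<and> card J = DIM('a) + 1 \<and> p \<in> convex hull (f ` J)}"
  have card_image_sub: "card (f ` J) = card J" if "J \<subseteq> X" for J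
    using inj that by (meson card_image inj_on_subset)
  have "{T. T \<subseteq> f ` X \<and> card T = DIM('a) + 1 \<and> p \<in> convex hull T} = image f ` ?J"
  proof (intro equalityI subsetI)
    fix T assume T: "T \<in> {T. T \<subseteq> f ` X \<and> card T = DIM('a) + 1 \<and> p \<in> convex hull T}"
    then obtain J where "J \<subseteq> X" "T = f ` J"
      by (auto elim: subset_imageE)
    then show "T \<in> image f ` ?J"
      using T card_image_sub by auto
  qed (use card_image_sub in auto)
  moreover have "inj_on (image f) ?J"
    using inj_on_image_Pow[OF inj] by (rule inj_on_subset) auto
  ultimately show ?thesis
    unfolding simplicial_count_def by (simp add: card_image)
qed

lemma choose_le_power: "n choose k \<le> n ^ k"
  using binomial_fact_pow[of n k] fact_ge_1[of k, where 'a = nat]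
  by (metis le_trans mult_le_mono2 nat_mult_1_right)

lemma card_supersets_le:
  assumes "finite X"
  shows "card {J. J \<subseteq> X \<and> card J = k \<and> F \<subseteq> J} \<le> card X ^ (k - card F)"
proof -
  let ?J = "{J. J \<subseteq> X \<and> card J = k \<and> F \<subseteq> J}"
  have "inj_on (\<lambda>J. J - F) ?J"
    by (rule inj_onI) blast
  then have "card ?J = card ((\<lambda>J. J - F) ` ?J)"
    by (simp add: card_image)
  also have "\<dots> \<le> card {K. K \<subseteq> X \<and> card K = k - card F}"
  proof (rule card_mono)
    show "finite {K. K \<subseteq> X \<and> card K = k - card F}"
      using assms by simp
    show "(\<lambda>J. J - F) ` ?J \<subseteq> {K. K \<subseteq> X \<and> card K = k - card F}"
      using assms by (auto intro!: card_Diff_subset intro: finite_subset)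
  qed
  also have "\<dots> = card X choose (k - card F)"
    using n_subsets[OF assms] by simp
  also have "\<dots> \<le> card X ^ (k - card F)"
    by (rule choose_le_power)
  finally show ?thesis .
qed

locale antipodal_configuration = basis_enumeration e for e :: "nat \<Rightarrow> 'a::euclidean_space" +
  fixes m r :: nat
begin

text \<open>With \<open>\<gamma> = moment_curve\<close>, index \<open>(q, \<plusminus>1)\<close> with \<open>1 \<le> q \<le> m\<close> is the point \<open>\<plusminus>q \<gamma>(q)\<close> and
  index \<open>(0, s)\<close> with \<open>0 \<le> s < r\<close> the point \<open>s/(r+1) \<gamma>(0)\<close>; the factor \<open>q\<close> keeps the points
  distinct when \<open>d = 1\<close>.\<close>

definition Idx :: "(nat \<times> int) set" where
  "Idx = {1..m} \<times> {-1, 1} \<union> {0} \<times> {0..<int r}"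

definition coef :: "nat \<times> int \<Rightarrow> real" where
  "coef j = (if fst j = 0 then of_int (snd j) / (real r + 1) else of_int (snd j) * real (fst j))"

definition point :: "nat \<times> int \<Rightarrow> 'a" where
  "point j = coef j *\<^sub>R moment_curve (real (fst j))"

lemma finite_Idx [simp]: "finite Idx"
  by (simp add: Idx_def)

lemma card_Idx: "card Idx = 2 * m + r"
proof -
  have "card Idx = card ({1..m} \<times> {-1, 1::int}) + card ({0::nat} \<times> {0..<int r})"
    unfolding Idx_def by (rule card_Un_disjoint) auto
  then show ?thesis
    by (simp add: card_cartesian_product)
qed

lemma Idx_sign: "(q, s) \<in> Idx \<Longrightarrow> q \<noteq> 0 \<Longrightarrow> s = 1 \<or> s = -1"
  by (auto simp: Idx_def)

lemma inner_point: "inner (point j) (e 0) = coef j"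
  using inner_moment_curve[of 0] by (simp add: point_def)

lemma inj_on_coef: "inj_on coef Idx"
proof (rule inj_onI)
  fix j j' assume j: "j \<in> Idx" "j' \<in> Idx" "coef j = coef j'"
  have "fst j = 0 \<longleftrightarrow> \<bar>coef j\<bar> < 1" if "j \<in> Idx" for j
    using that by (auto simp: Idx_def coef_def)
  with j have "fst j = 0 \<longleftrightarrow> fst j' = 0"
    by auto
  with j show "j = j'"
    by (auto simp: Idx_def coef_def)
qed

lemma inj_on_point: "inj_on point Idx"
  using inj_on_coef by (metis inner_point inj_on_def)

lemma sgn_coef: "j \<in> Idx \<Longrightarrow> sgn (coef j) = of_int (sgn (snd j))"
  by (auto simp: Idx_def coef_def sgn_mult sgn_if)

lemma point_antipodal: "q \<noteq> 0 \<Longrightarrow> point (q, -1) = - point (q, 1)"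
  by (simp add: point_def coef_def)

lemma card_halfspace_ge:
  assumes "closed_halfspace H" "0 \<in> H"
  shows "m + of_bool (0 < r) \<le> card (point ` Idx \<inter> H)"
proof -
  obtain c b where H: "H = {x. inner c x \<le> b}"
    using assms(1) unfolding closed_halfspace_def by blast
  have "0 \<le> b"
    using assms(2) H by simp
  define A where "A = {j \<in> Idx. point j \<in> H}"
  have "q \<in> fst ` A" if "q \<in> {1..m}" for q
  proof -
    have "point (q, 1) \<in> H \<or> point (q, -1) \<in> H"
      using point_antipodal[of q] that \<open>0 \<le> b\<close> H by (auto simp: inner_minus_right)
    moreover have "(q, 1) \<in> Idx" "(q, -1) \<in> Idx"
      using that by (auto simp: Idx_def)
    ultimately show ?thesis
      unfolding A_def by force
  qed
  moreover have "0 \<in> fst ` A" if "0 < r"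
  proof -
    have "(0, 0) \<in> A"
      using that assms(2) by (simp add: A_def Idx_def point_def coef_def)
    then show ?thesis
      by force
  qed
  ultimately have "{1..m} \<union> (if 0 < r then {0} else {}) \<subseteq> fst ` A"
    by auto
  then have "card ({1..m} \<union> (if 0 < r then {0} else {})) \<le> card (fst ` A)"
    by (rule card_mono[rotated]) (simp add: A_def)
  then have "m + of_bool (0 < r) \<le> card (fst ` A)"
    by (cases "0 < r") auto
  also have "\<dots> \<le> card A"
    by (rule card_image_le) (simp add: A_def)
  also have "\<dots> = card (point ` A)"
    using inj_on_point by (simp add: A_def card_image inj_on_subset)
  also have "\<dots> \<le> card (point ` Idx \<inter> H)"
    by (rule card_mono) (auto simp: A_def)
  finally show ?thesis .
qed

definition good_simplex :: "(nat \<times> int) set \<Rightarrow> bool" where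
  "good_simplex J \<longleftrightarrow> J \<subseteq> Idx \<and> card J = DIM('a) + 1 \<and> (0, 0) \<notin> J
     \<and> (\<forall>q. \<not> {(q, 1), (q, -1)} \<subseteq> J) \<and> 0 \<in> convex hull (point ` J)"

text \<open>The coefficient of \<open>\<gamma>(q)\<close> in \<open>\<Sum>j\<in>J. lam j *\<^sub>R point j\<close>.\<close>

definition fiber_weight :: "(nat \<times> int \<Rightarrow> real) \<Rightarrow> (nat \<times> int) set \<Rightarrow> nat \<Rightarrow> real" where
  "fiber_weight lam J q = (\<Sum>j\<in>{j \<in> J. fst j = q}. lam j * coef j)"

lemma convex_hull_point_dependency:
  assumes J: "J \<subseteq> Idx" and hull: "0 \<in> convex hull (point ` J)"
  shows "\<exists>lam. (\<forall>j\<in>J. 0 \<le> lam j) \<and> sum lam J = 1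
    \<and> (\<Sum>q\<in>fst ` J. fiber_weight lam J q *\<^sub>R moment_curve (real q)) = 0"
proof -
  have fin: "finite J"
    using J by (rule finite_subset) simp
  have inj: "inj_on point J"
    using inj_on_point J by (rule inj_on_subset)
  obtain u where u: "\<forall>x\<in>point ` J. 0 \<le> u x" "sum u (point ` J) = 1"
    "(\<Sum>x\<in>point ` J. u x *\<^sub>R x) = 0"
    using hull fin by (auto simp: convex_hull_finite)
  have "(\<Sum>q\<in>fst ` J. fiber_weight (u \<circ> point) J q *\<^sub>R moment_curve (real q))
      = (\<Sum>q\<in>fst ` J. \<Sum>j\<in>{j \<in> J. fst j = q}. u (point j) *\<^sub>R point j)"
    by (auto simp: fiber_weight_def point_def scaleR_sum_left intro!: sum.cong)
  also have "\<dots> = (\<Sum>j\<in>J. u (point j) *\<^sub>R point j)"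
    using fin by (intro sum.group) auto
  also have "\<dots> = 0"
    using u(3) by (simp add: sum.reindex[OF inj])
  finally show ?thesis
    using u(1,2) inj by (intro exI[of _ "u \<circ> point"]) (simp add: sum.reindex)
qed

lemma good_simplex_finite: "good_simplex J \<Longrightarrow> finite J"
  by (auto simp: good_simplex_def intro: finite_subset[OF _ finite_Idx])

lemma good_simplex_snd_nonzero: "good_simplex J \<Longrightarrow> (q, s) \<in> J \<Longrightarrow> s \<noteq> 0"
  by (auto simp: good_simplex_def Idx_def)

lemma good_simplex_fiber_sign:
  assumes "good_simplex J" "j \<in> J" "j' \<in> J" "fst j = fst j'"
  shows "0 < coef j * coef j'"
proof (cases "fst j = 0")
  case True
  have "0 < coef i" if "i \<in> J" "fst i = 0" for i
  proof -
    have "i \<in> Idx" "i \<noteq> (0, 0)"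
      using that assms(1) by (auto simp: good_simplex_def)
    then show ?thesis
      using that(2) by (cases i) (auto simp: Idx_def coef_def)
  qed
  then show ?thesis
    using assms True by simp
next
  case False
  then have "j = j'"
    using assms by (cases j, cases j') (auto simp: good_simplex_def Idx_def)
  moreover have "coef j \<noteq> 0"
    using assms False by (auto simp: good_simplex_def Idx_def coef_def)
  ultimately show ?thesis
    using not_real_square_gt_zero by blast
qed

text \<open>All coefficients in a fibre have the same sign, so a fibre sum can only vanish if all its
  weights do.\<close>

lemma good_simplex_fiber_weight_nonzero:
  assumes J: "good_simplex J" and lam: "\<forall>j\<in>J. 0 \<le> lam j" "sum lam J = 1"
  shows "\<exists>q\<in>fst ` J. fiber_weight lam J q \<noteq> 0"
proof (rule ccontr)
  assume "\<not> ?thesis"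
  then have zero: "fiber_weight lam J (fst j) = 0" if "j \<in> J" for j
    using that by auto
  have fin: "finite J"
    using J by (rule good_simplex_finite)
  have "lam j = 0" if j: "j \<in> J" for j
  proof -
    let ?F = "{j' \<in> J. fst j' = fst j}"
    have "(\<Sum>j'\<in>?F. lam j' * (coef j' * coef j)) = coef j * fiber_weight lam J (fst j)"
      by (simp add: fiber_weight_def sum_distrib_left mult_ac)
    also have "\<dots> = 0"
      using zero j by simp
    finally have sum0: "(\<Sum>j'\<in>?F. lam j' * (coef j' * coef j)) = 0" .
    have nonneg: "0 \<le> lam j' * (coef j' * coef j)" if "j' \<in> ?F" for j'
      using that lam good_simplex_fiber_sign[OF J, of j' j] j by simp
    have "lam j * (coef j * coef j) = 0"
      by (rule sum_nonneg_0[OF _ nonneg sum0]) (use fin j in auto)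
    then show ?thesis
      using good_simplex_fiber_sign[OF J j j] by auto
  qed
  then show False
    using lam by simp
qed

lemma good_simplex_card_fst:
  assumes J: "good_simplex J"
  shows "card (fst ` J) = DIM('a) + 1" and "inj_on fst J"
proof -
  have JI: "J \<subseteq> Idx" and fin: "finite J" and card: "card J = DIM('a) + 1"
    using J by (auto simp: good_simplex_def intro: finite_subset[OF _ finite_Idx])
  obtain lam where lam: "\<forall>j\<in>J. 0 \<le> lam j" "sum lam J = 1"
    and dep: "(\<Sum>q\<in>fst ` J. fiber_weight lam J q *\<^sub>R moment_curve (real q)) = 0"
    using convex_hull_point_dependency[OF JI] J by (auto simp: good_simplex_def)
  have "\<not> card (fst ` J) \<le> DIM('a)"
    using moment_curve_independent[OF _ _ _ dep] good_simplex_fiber_weight_nonzero[OF J lam] fin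
    by (auto simp: inj_on_def)
  moreover have "card (fst ` J) \<le> card J"
    using fin by (rule card_image_le)
  ultimately show "card (fst ` J) = DIM('a) + 1"
    using card by simp
  then show "inj_on fst J"
    using fin card by (simp add: eq_card_imp_inj_on)
qed

lemma good_simplex_dependency:
  assumes J: "good_simplex J"
  obtains \<mu> where "(\<Sum>q\<in>fst ` J. \<mu> q *\<^sub>R moment_curve (real q)) = 0"
    and "\<And>q s. (q, s) \<in> J \<Longrightarrow> sgn (\<mu> q) = of_int (sgn s)"
proof -
  have JI: "J \<subseteq> Idx" and fin: "finite J"
    using J by (auto simp: good_simplex_def intro: finite_subset[OF _ finite_Idx])
  obtain lam where lam: "\<forall>j\<in>J. 0 \<le> lam j" "sum lam J = 1"
    and dep: "(\<Sum>q\<in>fst ` J. fiber_weight lam J q *\<^sub>R moment_curve (real q)) = 0"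
    using convex_hull_point_dependency[OF JI] J by (auto simp: good_simplex_def)
  have single: "fiber_weight lam J (fst j) = lam j * coef j" if "j \<in> J" for j
  proof -
    have "{j' \<in> J. fst j' = fst j} = {j}"
      using good_simplex_card_fst(2)[OF J] that by (auto simp: inj_on_def)
    then show ?thesis
      by (simp add: fiber_weight_def)
  qed
  have nonzero: "fiber_weight lam J q \<noteq> 0" if "q \<in> fst ` J" for q
    using moment_curve_dependency_vanishes[OF _ _ _ dep that] fin
      good_simplex_card_fst(1)[OF J] good_simplex_fiber_weight_nonzero[OF J lam]
    by (auto simp: inj_on_def)
  have sgn: "sgn (fiber_weight lam J q) = of_int (sgn s)" if qs: "(q, s) \<in> J" for q s
  proof -
    have "0 < lam (q, s)"
      using single[OF qs] nonzero[of q] lam(1) qs by force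
    then have "sgn (fiber_weight lam J q) = sgn (coef (q, s))"
      using single[OF qs] by (simp add: sgn_mult)
    then show ?thesis
      using sgn_coef qs JI by auto
  qed
  show ?thesis
    using that[OF dep sgn] by blast
qed

lemma good_simplex_sgn_agree:
  assumes J: "good_simplex J" and J': "good_simplex J'" and Q: "fst ` J = fst ` J'"
    and q0: "(q0, s0) \<in> J" "(q0, s0') \<in> J'" "sgn s0 = sgn s0'"
    and q: "(q, s) \<in> J" "(q, s') \<in> J'"
  shows "sgn s = sgn s'"
proof -
  obtain \<mu> where dep: "(\<Sum>q\<in>fst ` J. \<mu> q *\<^sub>R moment_curve (real q)) = 0"
    and sgn: "\<And>q s. (q, s) \<in> J \<Longrightarrow> sgn (\<mu> q) = of_int (sgn s)"
    using good_simplex_dependency[OF J] by blast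
  obtain \<mu>' where dep': "(\<Sum>q\<in>fst ` J. \<mu>' q *\<^sub>R moment_curve (real q)) = 0"
    and sgn': "\<And>q s. (q, s) \<in> J' \<Longrightarrow> sgn (\<mu>' q) = of_int (sgn s)"
    using good_simplex_dependency[OF J'] Q by metis
  have "\<mu>' q0 * \<mu> q = \<mu> q0 * \<mu>' q"
    using moment_curve_dependencies_proportional[OF _ _ _ dep dep', of q0 q]
      good_simplex_finite[OF J] good_simplex_card_fst(1)[OF J] q0(1) q(1)
    by (force simp: inj_on_def)
  then have "sgn (\<mu>' q0) * sgn (\<mu> q) = sgn (\<mu> q0) * sgn (\<mu>' q)"
    by (metis sgn_mult)
  moreover have "sgn (\<mu>' q0) = sgn (\<mu> q0)" "sgn (\<mu> q0) \<noteq> 0"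
    using sgn[OF q0(1)] sgn'[OF q0(2)] q0(3) good_simplex_snd_nonzero[OF J q0(1)] by (auto simp: sgn_0_0)
  ultimately have "sgn (\<mu> q) = sgn (\<mu>' q)"
    by simp
  then show ?thesis
    using sgn[OF q(1)] sgn'[OF q(2)] by simp
qed

definition lead_sign :: "(nat \<times> int) set \<Rightarrow> int" where
  "lead_sign J = (THE s. (Min (fst ` J), s) \<in> J)"

lemma good_simplex_lead_sign:
  assumes J: "good_simplex J"
  shows "(Min (fst ` J), lead_sign J) \<in> J"
proof -
  have "finite J" "J \<noteq> {}"
    using J good_simplex_finite by (auto simp: good_simplex_def)
  then have "Min (fst ` J) \<in> fst ` J"
    by simp
  then obtain s where s: "(Min (fst ` J), s) \<in> J"
    by force
  moreover have "s' = s" if "(Min (fst ` J), s') \<in> J" for s'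
    using inj_onD[OF good_simplex_card_fst(2)[OF J] _ that s] by simp
  ultimately have "\<exists>!s. (Min (fst ` J), s) \<in> J"
    by blast
  then show ?thesis
    unfolding lead_sign_def by (rule theI')
qed

lemma good_simplex_subsetI:
  assumes J: "good_simplex J" and J': "good_simplex J'"
    and Q: "fst ` J = fst ` J'" and lead: "lead_sign J = lead_sign J'"
  shows "J \<subseteq> J'"
proof (rule subsetI)
  fix j assume j: "j \<in> J"
  obtain q s where qs: "j = (q, s)"
    by force
  obtain s' where qs': "(q, s') \<in> J'"
    using j qs Q by force
  let ?q0 = "Min (fst ` J)"
  have lead_J: "(?q0, lead_sign J) \<in> J" and lead_J': "(?q0, lead_sign J) \<in> J'"
    using good_simplex_lead_sign[OF J] good_simplex_lead_sign[OF J'] Q lead by auto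
  have "sgn s = sgn s'"
    using good_simplex_sgn_agree[OF J J' Q lead_J lead_J' refl] j qs qs' by simp
  moreover have "s = s'" if "q = 0"
  proof -
    have "?q0 \<le> q"
      using good_simplex_finite[OF J] j qs by (intro Min_le) force+
    then have "?q0 = q"
      using that by simp
    then have "s = lead_sign J" "s' = lead_sign J"
      using inj_onD[OF good_simplex_card_fst(2)[OF J] _ j[unfolded qs] lead_J]
        inj_onD[OF good_simplex_card_fst(2)[OF J'] _ qs' lead_J'] by auto
    then show ?thesis
      by simp
  qed
  moreover have "s = s'" if "q \<noteq> 0" "sgn s = sgn s'"
  proof -
    have "(q, s) \<in> Idx" "(q, s') \<in> Idx"
      using j qs qs' J J' by (auto simp: good_simplex_def)
    then have "s \<in> {-1, 1}" "s' \<in> {-1, 1}"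
      using Idx_sign that(1) by auto
    then show ?thesis
      using that(2) by auto
  qed
  ultimately show "j \<in> J'"
    using qs qs' by blast
qed

lemma good_simplex_eqI:
  assumes "good_simplex J" "good_simplex J'" "fst ` J = fst ` J'" "lead_sign J = lead_sign J'"
  shows "J = J'"
  using good_simplex_subsetI[OF assms] good_simplex_subsetI[OF assms(2,1) assms(3,4)[symmetric]]
  by (rule subset_antisym)

lemma good_simplex_key:
  assumes J: "good_simplex J"
  shows "(fst ` J, lead_sign J) \<in> {Q. Q \<subseteq> {1..m} \<and> card Q = DIM('a) + 1} \<times> {-1, 1}
    \<union> (\<lambda>(Q, s). (insert 0 Q, s)) ` ({Q. Q \<subseteq> {1..m} \<and> card Q = DIM('a)} \<times> {1..<int r})"
proof -
  have JI: "J \<subseteq> Idx" and "(0, 0) \<notin> J" and fin: "finite (fst ` J)"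
    using J by (auto simp: good_simplex_def intro: finite_subset[OF _ finite_Idx])
  have card: "card (fst ` J) = DIM('a) + 1"
    by (rule good_simplex_card_fst(1)[OF J])
  have sub: "fst ` J \<subseteq> {0..m}"
    using JI by (auto simp: Idx_def)
  have lead: "(Min (fst ` J), lead_sign J) \<in> Idx"
    using good_simplex_lead_sign[OF J] JI by blast
  show ?thesis
  proof (cases "0 \<in> fst ` J")
    case False
    then have "fst ` J \<subseteq> {1..m}"
      using sub by (auto simp: subset_eq Suc_le_eq intro!: gr0I)
    moreover have "Min (fst ` J) \<in> fst ` J"
      using fin card by (intro Min_in) auto
    then have "Min (fst ` J) \<noteq> 0"
      using False by metis
    then have "lead_sign J \<in> {-1, 1}"
      using Idx_sign[OF lead] by auto
    ultimately show ?thesis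
      using card by (intro UnI1) simp
  next
    case True
    define Q where "Q = fst ` J - {0}"
    have "Min (fst ` J) = 0"
      using Min_le[OF fin True] by simp
    then have "(0, lead_sign J) \<in> Idx - {(0, 0)}"
      using lead good_simplex_lead_sign[OF J] \<open>(0, 0) \<notin> J\<close> by auto
    then have "lead_sign J \<in> {1..<int r}"
      by (auto simp: Idx_def)
    moreover have "Q \<subseteq> {1..m}" "card Q = DIM('a)"
      using sub card True fin by (auto simp: Q_def)
    moreover have "(fst ` J, lead_sign J) = (\<lambda>(Q, s). (insert 0 Q, s)) (Q, lead_sign J)"
      using True by (auto simp: Q_def)
    ultimately show ?thesis
      by (intro UnI2 image_eqI) auto
  qed
qed

lemma card_good_simplices:
  "card {J. good_simplex J} \<le> 2 * (m choose (DIM('a) + 1)) + (m choose DIM('a)) * r"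
proof -
  let ?Q = "\<lambda>k. {Q. Q \<subseteq> {1..m} \<and> card Q = k}"
  let ?R1 = "?Q (DIM('a) + 1) \<times> {-1, 1::int}"
  let ?R2 = "(\<lambda>(Q, s). (insert 0 Q, s)) ` (?Q DIM('a) \<times> {1..<int r})"
  have fin: "finite (?Q k)" for k
    by (rule finite_subset[of _ "Pow {1..m}"]) auto
  have "inj_on (\<lambda>J. (fst ` J, lead_sign J)) {J. good_simplex J}"
    by (rule inj_onI) (rule good_simplex_eqI; simp)
  then have "card {J. good_simplex J} = card ((\<lambda>J. (fst ` J, lead_sign J)) ` {J. good_simplex J})"
    by (rule card_image[symmetric])
  also have "\<dots> \<le> card (?R1 \<union> ?R2)"
    using good_simplex_key fin by (intro card_mono) auto
  also have "\<dots> \<le> card ?R1 + card ?R2"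
    by (rule card_Un_le)
  also have "\<dots> \<le> card ?R1 + card (?Q DIM('a) \<times> {1..<int r})"
    by (intro add_left_mono card_image_le) (simp add: fin)
  also have "\<dots> \<le> 2 * (m choose (DIM('a) + 1)) + (m choose DIM('a)) * r"
    by (simp add: card_cartesian_product n_subsets nat_le_iff)
  finally show ?thesis .
qed

definition simplices_containing :: "(nat \<times> int) set \<Rightarrow> (nat \<times> int) set set" where
  "simplices_containing F = {J. J \<subseteq> Idx \<and> card J = DIM('a) + 1 \<and> F \<subseteq> J}"

lemma origin_simplices_subset:
  "{J. J \<subseteq> Idx \<and> card J = DIM('a) + 1 \<and> 0 \<in> convex hull (point ` J)}
    \<subseteq> {J. good_simplex J} \<union> simplices_containing {(0, 0)}
      \<union> (\<Union>q\<in>{1..m}. simplices_containing {(q, 1), (q, -1)})"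
proof (rule subsetI, cases)
  fix J assume "J \<in> {J. J \<subseteq> Idx \<and> card J = DIM('a) + 1 \<and> 0 \<in> convex hull (point ` J)}"
    and bad: "\<not> good_simplex J"
  then have J: "J \<subseteq> Idx" "card J = DIM('a) + 1"
    by auto
  from bad consider "(0, 0) \<in> J" | q where "{(q, 1), (q, -1)} \<subseteq> J"
    using \<open>J \<in> _\<close> by (auto simp: good_simplex_def)
  then show "J \<in> {J. good_simplex J} \<union> simplices_containing {(0, 0)}
      \<union> (\<Union>q\<in>{1..m}. simplices_containing {(q, 1), (q, -1)})"
  proof cases
    case 1
    then have "J \<in> simplices_containing {(0, 0)}"
      using J by (simp add: simplices_containing_def)
    then show ?thesis
      by blast
  next
    case (2 q)
    then have "(q, -1) \<in> Idx"
      using J(1) by blast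
    then have "q \<in> {1..m}"
      by (auto simp: Idx_def)
    moreover have "J \<in> simplices_containing {(q, 1), (q, -1)}"
      using 2 J by (simp add: simplices_containing_def)
    ultimately show ?thesis
      by blast
  qed
qed simp

lemma card_simplices_containing_le:
  "card (simplices_containing F) \<le> (2 * m + r) ^ (DIM('a) + 1 - card F)"
  using card_supersets_le[OF finite_Idx] by (simp add: simplices_containing_def card_Idx)

lemma card_degenerate_simplices_le:
  "card (simplices_containing {(0, 0)} \<union> (\<Union>q\<in>{1..m}. simplices_containing {(q, 1), (q, -1)}))
    \<le> 2 * (2 * m + r) ^ DIM('a)"
proof -
  let ?d = "DIM('a)" and ?n = "2 * m + r"
  have "card (\<Union>q\<in>{1..m}. simplices_containing {(q, 1), (q, -1)})
      \<le> (\<Sum>q\<in>{1..m}. card (simplices_containing {(q, 1), (q, -1)}))"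
    by (rule card_UN_le) simp
  also have "\<dots> \<le> (\<Sum>q\<in>{1..m}. ?n ^ (?d - 1))"
    using card_simplices_containing_le[of "{(q, 1), (q, -1)}" for q] by (intro sum_mono) simp
  also have "\<dots> \<le> ?n * ?n ^ (?d - 1)"
    by simp
  also have "\<dots> = ?n ^ ?d"
    using power_Suc[of ?n "?d - 1"] by simp
  finally have "card (\<Union>q\<in>{1..m}. simplices_containing {(q, 1), (q, -1)}) \<le> ?n ^ ?d" .
  moreover have "card (simplices_containing {(0, 0)}) \<le> ?n ^ ?d"
    using card_simplices_containing_le[of "{(0, 0)}"] by simp
  ultimately show ?thesis
    using card_Un_le[of "simplices_containing {(0, 0)}"
        "\<Union>q\<in>{1..m}. simplices_containing {(q, 1), (q, -1)}"] by linarith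
qed

lemma simplicial_count_le:
  "simplicial_count 0 (point ` Idx)
    \<le> 2 * (m choose (DIM('a) + 1)) + (m choose DIM('a)) * r + 2 * (2 * m + r) ^ DIM('a)"
proof -
  let ?D = "simplices_containing {(0, 0)} \<union> (\<Union>q\<in>{1..m}. simplices_containing {(q, 1), (q, -1)})"
  have "finite ({J. good_simplex J} \<union> ?D)"
    by (rule finite_subset[of _ "Pow Idx"]) (auto simp: good_simplex_def simplices_containing_def)
  then have "simplicial_count 0 (point ` Idx) \<le> card ({J. good_simplex J} \<union> ?D)"
    unfolding simplicial_count_image[OF inj_on_point]
    using origin_simplices_subset by (intro card_mono) blast+
  also have "\<dots> \<le> card {J. good_simplex J} + card ?D"
    by (rule card_Un_le)
  finally show ?thesis
    using card_good_simplices card_degenerate_simplices_le by linarith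
qed

end

lemma ex_antipodal_configuration:
  "\<exists>S :: 'a::euclidean_space set. finite S \<and> card S = 2 * m + r
     \<and> (\<forall>H. closed_halfspace H \<and> 0 \<in> H \<longrightarrow> m + of_bool (0 < r) \<le> card (S \<inter> H))
     \<and> simplicial_count 0 S
        \<le> 2 * (m choose (DIM('a) + 1)) + (m choose DIM('a)) * r + 2 * (2 * m + r) ^ DIM('a)"
proof -
  obtain e :: "nat \<Rightarrow> 'a" where "bij_betw e {..<DIM('a)} Basis"
    using ex_bij_betw_nat_finite[of "Basis :: 'a set"] by (auto simp: atLeast0LessThan)
  then interpret antipodal_configuration e m r
    by unfold_locales
  show ?thesis
    using card_image[OF inj_on_point] card_Idx card_halfspace_ge simplicial_count_le
    by (intro exI[of _ "point ` Idx"]) auto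
qed

section \<open>The main term\<close>

lemma main_term_mono:
  fixes x y N :: real
  assumes "0 \<le> x" "x \<le> y" "2 * y \<le> N"
  shows "x ^ d * ((real d + 1) * N - 2 * real d * x) \<le> y ^ d * ((real d + 1) * N - 2 * real d * y)"
proof -
  let ?f = "\<lambda>t::real. t ^ d * ((real d + 1) * N - 2 * real d * t)"
  have "?f x \<le> ?f y"
  proof (rule DERIV_nonneg_imp_nondecreasing[OF assms(2)])
    fix t assume t: "x \<le> t" "t \<le> y"
    have "(?f has_real_derivative
        (real d * t ^ (d - 1) * ((real d + 1) * N - 2 * real d * t) + t ^ d * (- 2 * real d))) (at t)"
      by (auto intro!: derivative_eq_intros)
    moreover have "real d * t ^ (d - 1) * ((real d + 1) * N - 2 * real d * t) + t ^ d * (- 2 * real d)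
        = real d * (real d + 1) * t ^ (d - 1) * (N - 2 * t)"
      by (cases d) (simp_all add: algebra_simps)
    moreover have "0 \<le> real d * (real d + 1) * t ^ (d - 1) * (N - 2 * t)"
      using assms t by simp
    ultimately show "\<exists>z. (?f has_real_derivative z) (at t) \<and> 0 \<le> z"
      by auto
  qed
  then show ?thesis .
qed

lemma binomial_count_le_main_term:
  fixes \<alpha> :: real
  assumes \<alpha>: "\<alpha> \<le> 1/2" and m: "real m \<le> \<alpha> * real n"
  shows "real (2 * (m choose (d + 1)) + (m choose d) * (n - 2 * m))
    \<le> (real (d + 1) * \<alpha> ^ d - 2 * real d * \<alpha> ^ (d + 1)) * real n ^ (d + 1) / fact (d + 1)"
proof -
  let ?M = "real m" and ?N = "real n"
  have half: "2 * (\<alpha> * ?N) \<le> ?N"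
    using mult_right_mono[OF \<alpha>, of ?N] by simp
  then have "2 * m \<le> n"
    using m by linarith
  then have r: "real (n - 2 * m) = ?N - 2 * ?M"
    by simp
  have choose: "fact k * real (m choose k) \<le> ?M ^ k" for k
    using binomial_fact_pow[of m k] by (metis mult.commute of_nat_fact of_nat_le_iff of_nat_mult of_nat_power)
  have count: "real (2 * (m choose (d + 1)) + (m choose d) * (n - 2 * m))
      = 2 * real (m choose (d + 1)) + real (m choose d) * (?N - 2 * ?M)"
    by (simp only: of_nat_add of_nat_mult r)
  have "fact (d + 1) * real (2 * (m choose (d + 1)) + (m choose d) * (n - 2 * m))
      = 2 * (fact (d + 1) * real (m choose (d + 1))) + (real d + 1) * (fact d * real (m choose d)) * (?N - 2 * ?M)"
    unfolding count by (simp add: algebra_simps)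
  also have "\<dots> \<le> 2 * ?M ^ (d + 1) + (real d + 1) * ?M ^ d * (?N - 2 * ?M)"
  proof (rule add_mono)
    show "2 * (fact (d + 1) * real (m choose (d + 1))) \<le> 2 * ?M ^ (d + 1)"
      using choose[of "d + 1"] by linarith
    show "(real d + 1) * (fact d * real (m choose d)) * (?N - 2 * ?M) \<le> (real d + 1) * ?M ^ d * (?N - 2 * ?M)"
      using choose[of d] \<open>2 * m \<le> n\<close> by (intro mult_right_mono mult_left_mono) auto
  qed
  also have "\<dots> = ?M ^ d * ((real d + 1) * ?N - 2 * real d * ?M)"
    by (simp add: algebra_simps)
  also have "\<dots> \<le> (\<alpha> * ?N) ^ d * ((real d + 1) * ?N - 2 * real d * (\<alpha> * ?N))"
    using m half by (intro main_term_mono) auto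
  also have "\<dots> = (real (d + 1) * \<alpha> ^ d - 2 * real d * \<alpha> ^ (d + 1)) * ?N ^ (d + 1)"
    by (simp add: power_mult_distrib algebra_simps)
  finally show ?thesis
    by (simp only: pos_le_divide_eq[OF fact_gt_zero] mult.commute)
qed

lemma nat_floor_split:
  fixes \<alpha> :: real and n :: nat
  assumes "0 \<le> \<alpha>" "\<alpha> \<le> 1/2"
  defines "m \<equiv> nat \<lfloor>\<alpha> * real n\<rfloor>"
  shows "real m \<le> \<alpha> * real n" "n = 2 * m + (n - 2 * m)"
    "\<alpha> * real n \<le> real (m + of_bool (0 < n - 2 * m))"
proof -
  have "real m = of_int \<lfloor>\<alpha> * real n\<rfloor>"
    using assms(1) unfolding m_def by simp
  then have m: "real m \<le> \<alpha> * real n" "\<alpha> * real n < real m + 1"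
    by simp_all
  have half: "\<alpha> * real n \<le> real n / 2"
    using mult_right_mono[OF assms(2), of "real n"] by simp
  then show "n = 2 * m + (n - 2 * m)"
    using m(1) by linarith
  show "real m \<le> \<alpha> * real n"
    by (rule m(1))
  show "\<alpha> * real n \<le> real (m + of_bool (0 < n - 2 * m))"
    using m half by (cases "0 < n - 2 * m") auto
qed

theorem theorem5:
  fixes \<alpha> :: real
  assumes "0 < \<alpha>" and "\<alpha> \<le> 1/2"
  shows "\<exists>C::real. \<forall>n::nat. n > 0 \<longrightarrow>
           (\<exists>S :: 'a::euclidean_space set. finite S \<and> card S = n \<and>
              at_depth 0 (\<alpha> * real n) S \<and>
              real (simplicial_count 0 S)
                \<le> (real (DIM('a) + 1) * \<alpha> ^ DIM('a) - 2 * real DIM('a) * \<alpha> ^ (DIM('a) + 1))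
                    * real n ^ (DIM('a) + 1) / fact (DIM('a) + 1)
                  + C * real n ^ DIM('a))"
proof (rule exI[of _ 2], intro allI impI)
  fix n :: nat
  let ?d = "DIM('a)"
  let ?main = "(real (?d + 1) * \<alpha> ^ ?d - 2 * real ?d * \<alpha> ^ (?d + 1)) * real n ^ (?d + 1) / fact (?d + 1)"
  define m where "m = nat \<lfloor>\<alpha> * real n\<rfloor>"
  define r where "r = n - 2 * m"
  have m: "real m \<le> \<alpha> * real n" and n: "n = 2 * m + r"
    and depth_bound: "\<alpha> * real n \<le> real (m + of_bool (0 < r))"
    using nat_floor_split[of \<alpha> n] assms unfolding m_def r_def by auto
  obtain S :: "'a set" where S: "finite S" "card S = n"
    and depth: "\<And>H. closed_halfspace H \<and> 0 \<in> H \<Longrightarrow> m + of_bool (0 < r) \<le> card (S \<inter> H)"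
    and count: "simplicial_count 0 S \<le> 2 * (m choose (?d + 1)) + (m choose ?d) * r + 2 * n ^ ?d"
    using ex_antipodal_configuration[of m r, folded n] by blast
  have "at_depth 0 (\<alpha> * real n) S"
    unfolding at_depth_def using depth depth_bound by (meson of_nat_le_iff order_trans)
  moreover have "real (simplicial_count 0 S)
      \<le> real (2 * (m choose (?d + 1)) + (m choose ?d) * r) + 2 * real n ^ ?d"
    using of_nat_mono[OF count, where 'a = real] by simp
  then have "real (simplicial_count 0 S) \<le> ?main + 2 * real n ^ ?d"
    using binomial_count_le_main_term[OF assms(2) m, of ?d, folded r_def] by linarith
  ultimately show "\<exists>S :: 'a set. finite S \<and> card S = n \<and> at_depth 0 (\<alpha> * real n) S
      \<and> real (simplicial_count 0 S) \<le> ?main + 2 * real n ^ ?d"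
    using S by blast
qed

end
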